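(* Let $R$ be a noetherian ring, $\nu$ a valuation having a center on $R$, $b\in R\setminus\mathrm{supp}(\nu)$ and $a_1,\ldots,a_r\in R$ with $\nu(b)\le\nu(a_i)$ for all $i$, and let $R'=(R/J(b))[a_1/b,\ldots,a_r/b]\subseteq R_b$. Then for every $c'\in R'$ there is $c\in R$ with $\mathrm{ann}_{R'}(c')=\mathrm{ann}_{R'}(c/1)$. Moreover, if $\mathrm{ann}_{R'}(c')$ is a prime ideal of $R'$, then $\mathrm{ann}_R(b^Nc)$ is a prime ideal of $R$ for some $N\in\mathbb N$.
   Context: A valuation on a ring $R$ is a map $\nu:R\to\Gamma\cup\{\infty\}$ ($\Gamma$ an ordered abelian group) with $\nu(ab)=\nu(a)+\nu(b)$, $\nu(a+b)\ge\min\{\nu(a),\nu(b)\}$, $\nu(1)=0$, $\nu(0)=\infty$, whose support $\mathrm{supp}(\nu)=\{a:\nu(a)=\infty\}$ is a minimal prime ideal; $\nu$ has a center on $R$ if $\nu\ge0$ on $R$. For $b\in R$, $J(b)=\bigcup_{i\ge1}\mathrm{ann}_R(b^i)$ is the kernel of $R\to R_b$, so $R/J(b)$ is identified with its image in $R_b$. *)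

theory Defs
  imports Main
begin

definition is_ideal :: "'a::comm_ring_1 set \<Rightarrow> bool" where
  "is_ideal I \<longleftrightarrow> 0 \<in> I \<and> (\<forall>x\<in>I. \<forall>y\<in>I. x + y \<in> I) \<and> (\<forall>x\<in>I. \<forall>r. r * x \<in> I)"

definition is_prime_ideal :: "'a::comm_ring_1 set \<Rightarrow> bool" where
  "is_prime_ideal P \<longleftrightarrow> is_ideal P \<and> (1::'a) \<notin> P \<and> (\<forall>x y. x * y \<in> P \<longrightarrow> x \<in> P \<or> y \<in> P)"

definition is_minimal_prime :: "'a::comm_ring_1 set \<Rightarrow> bool" where
  "is_minimal_prime P \<longleftrightarrow> is_prime_ideal P \<and> (\<forall>Q. is_prime_ideal Q \<and> Q \<subseteq> P \<longrightarrow> Q = P)"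

definition noetherian_ring :: "'a::comm_ring_1 itself \<Rightarrow> bool" where
  "noetherian_ring _ \<longleftrightarrow>
     (\<forall>f :: nat \<Rightarrow> 'a set. (\<forall>n. is_ideal (f n) \<and> f n \<subseteq> f (Suc n)) \<longrightarrow> (\<exists>N. \<forall>n\<ge>N. f n = f N))"

definition ann :: "'a::comm_ring_1 \<Rightarrow> 'a set" where
  "ann x = {y. y * x = 0}"

section \<open>Valuations with values in \<Gamma> \<union> {\<infinity>}; None stands for \<infinity>\<close>

fun ext_le :: "'g::linordered_ab_group_add option \<Rightarrow> 'g option \<Rightarrow> bool" where
  "ext_le _ None = True"
| "ext_le None (Some _) = False"
| "ext_le (Some x) (Some y) = (x \<le> y)"

fun ext_add :: "'g::linordered_ab_group_add option \<Rightarrow> 'g option \<Rightarrow> 'g option" where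
  "ext_add (Some x) (Some y) = Some (x + y)"
| "ext_add _ _ = None"

definition supp :: "('a \<Rightarrow> 'g option) \<Rightarrow> 'a set" where
  "supp v = {a. v a = None}"

definition valuation :: "('a::comm_ring_1 \<Rightarrow> 'g::linordered_ab_group_add option) \<Rightarrow> bool" where
  "valuation v \<longleftrightarrow>
     (\<forall>a b. v (a * b) = ext_add (v a) (v b)) \<and>
     (\<forall>a b. ext_le (v a) (v (a + b)) \<or> ext_le (v b) (v (a + b))) \<and>
     v 1 = Some 0 \<and> v 0 = None \<and>
     is_minimal_prime (supp v)"

definition has_center :: "('a::comm_ring_1 \<Rightarrow> 'g::linordered_ab_group_add option) \<Rightarrow> bool" where
  "has_center v \<longleftrightarrow> (\<forall>a. ext_le (Some 0) (v a))"

section \<open>The localization R_b, via representatives (x, n) standing for x / b^n\<close>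

definition loc_eq :: "'a::comm_ring_1 \<Rightarrow> 'a \<times> nat \<Rightarrow> 'a \<times> nat \<Rightarrow> bool" where
  "loc_eq b p q \<longleftrightarrow> (\<exists>k. b ^ k * (fst p * b ^ snd q - fst q * b ^ snd p) = 0)"

definition loc_add :: "'a::comm_ring_1 \<Rightarrow> 'a \<times> nat \<Rightarrow> 'a \<times> nat \<Rightarrow> 'a \<times> nat" where
  "loc_add b p q = (fst p * b ^ snd q + fst q * b ^ snd p, snd p + snd q)"

definition loc_mult :: "'a::comm_ring_1 \<times> nat \<Rightarrow> 'a \<times> nat \<Rightarrow> 'a \<times> nat" where
  "loc_mult p q = (fst p * fst q, snd p + snd q)"

text \<open>R' = (R/J(b))[a_1/b, ..., a_r/b] inside R_b: the subring of R_b generated by the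
  image of R (which is R/J(b)) and the fractions a_i/b, as a set of representatives
  closed under equality in R_b.\<close>
inductive_set Rprime :: "'a::comm_ring_1 \<Rightarrow> 'a list \<Rightarrow> ('a \<times> nat) set"
  for b :: 'a and as :: "'a list" where
  base: "(r, 0) \<in> Rprime b as"
| gen: "a \<in> set as \<Longrightarrow> (a, 1) \<in> Rprime b as"
| add: "p \<in> Rprime b as \<Longrightarrow> q \<in> Rprime b as \<Longrightarrow> loc_add b p q \<in> Rprime b as"
| mult: "p \<in> Rprime b as \<Longrightarrow> q \<in> Rprime b as \<Longrightarrow> loc_mult p q \<in> Rprime b as"
| eq: "p \<in> Rprime b as \<Longrightarrow> loc_eq b p q \<Longrightarrow> q \<in> Rprime b as"

definition ann_Rprime :: "'a::comm_ring_1 \<Rightarrow> 'a list \<Rightarrow> 'a \<times> nat \<Rightarrow> ('a \<times> nat) set" where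
  "ann_Rprime b as c' = {d \<in> Rprime b as. loc_eq b (loc_mult d c') (0, 0)}"

definition prime_ideal_Rprime :: "'a::comm_ring_1 \<Rightarrow> 'a list \<Rightarrow> ('a \<times> nat) set \<Rightarrow> bool" where
  "prime_ideal_Rprime b as P \<longleftrightarrow>
     P \<subseteq> Rprime b as \<and>
     (\<forall>p\<in>P. \<forall>q\<in>Rprime b as. loc_eq b p q \<longrightarrow> q \<in> P) \<and>
     (0, 0) \<in> P \<and>
     (\<forall>p\<in>P. \<forall>q\<in>P. loc_add b p q \<in> P) \<and>
     (\<forall>p\<in>P. \<forall>q\<in>Rprime b as. loc_mult q p \<in> P) \<and>
     (1, 0) \<notin> P \<and>
     (\<forall>p\<in>Rprime b as. \<forall>q\<in>Rprime b as. loc_mult p q \<in> P \<longrightarrow> p \<in> P \<or> q \<in> P)"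

end

theory Submission
  imports Defs
begin

text \<open>Since b is a unit in R_b, the annihilator in R' of c' = c/b^n equals that of c/1.
  Its contraction to R consists of the d with b^k d c = 0 for some k, i.e. it is the union
  of the ascending chain ann_R(b^k c); by the noetherian hypothesis this chain becomes
  stationary at some N, so the contraction is ann_R(b^N c). A contraction of a prime ideal
  is prime.\<close>

lemma is_ideal_ann: "is_ideal (ann x)"
  unfolding is_ideal_def ann_def by (auto simp: distrib_right mult.assoc)

lemma ann_subset_ann_mult: "ann x \<subseteq> ann (y * x)"
  unfolding ann_def by (auto simp: mult.left_commute[of _ y])

lemma noetherian_mono_chain_bounded:
  fixes f :: "nat \<Rightarrow> 'a::comm_ring_1 set"
  assumes "noetherian_ring TYPE('a)"
    and "\<And>n. is_ideal (f n)" and "mono f"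
  obtains N where "\<And>n. f n \<subseteq> f N"
proof -
  have "\<forall>n. is_ideal (f n) \<and> f n \<subseteq> f (Suc n)"
    using assms(2) monoD[OF assms(3)] by simp
  with assms(1) obtain N where N: "\<And>n. n \<ge> N \<Longrightarrow> f n = f N"
    unfolding noetherian_ring_def by blast
  have "f n \<subseteq> f N" for n
  proof (cases "n \<le> N")
    case True
    then show ?thesis using monoD[OF assms(3)] by blast
  next
    case False
    then show ?thesis using N[of n] by simp
  qed
  then show ?thesis using that by blast
qed

lemma noetherian_ann_power_stable:
  assumes "noetherian_ring TYPE('a::comm_ring_1)"
  obtains N where "\<And>d. (\<exists>k. b ^ k * (d * x) = 0) \<longleftrightarrow> d \<in> ann (b ^ N * (x :: 'a))"
proof -
  have chain_mono: "mono (\<lambda>k. ann (b ^ k * x))"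
  proof (rule monoI)
    fix k l :: nat assume "k \<le> l"
    then have "b ^ l * x = b ^ (l - k) * (b ^ k * x)"
      by (metis le_add_diff_inverse2 mult.assoc power_add)
    then show "ann (b ^ k * x) \<subseteq> ann (b ^ l * x)"
      by (simp add: ann_subset_ann_mult)
  qed
  obtain N where N: "\<And>k. ann (b ^ k * x) \<subseteq> ann (b ^ N * x)"
    using noetherian_mono_chain_bounded[of "\<lambda>k. ann (b ^ k * x)", OF assms is_ideal_ann chain_mono]
    by blast
  have ann_power: "d \<in> ann (b ^ k * x) \<longleftrightarrow> b ^ k * (d * x) = 0" for d k
    by (simp add: ann_def mult.left_commute[of d])
  have "(\<exists>k. b ^ k * (d * x) = 0) \<longleftrightarrow> d \<in> ann (b ^ N * x)" for d
    using N ann_power by blast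
  then show ?thesis using that by blast
qed

lemma ann_Rprime_iff:
  "d \<in> ann_Rprime b as (x, n) \<longleftrightarrow> d \<in> Rprime b as \<and> (\<exists>k. b ^ k * (fst d * x) = 0)"
  by (simp add: ann_Rprime_def loc_eq_def loc_mult_def)

lemma ann_Rprime_drop_denominator: "ann_Rprime b as (x, n) = ann_Rprime b as (x, 0)"
  by (auto simp: ann_Rprime_iff)

lemma is_prime_ideal_contraction:
  assumes prime: "prime_ideal_Rprime b as (ann_Rprime b as (x, 0))"
    and contr: "\<And>d. (\<exists>k. b ^ k * (d * x) = 0) \<longleftrightarrow> d \<in> I"
    and "is_ideal I"
  shows "is_prime_ideal I"
proof -
  let ?P = "ann_Rprime b as (x, 0)"
  have proper: "(1, 0) \<notin> ?P"
    and prime_mult: "\<And>p q. p \<in> Rprime b as \<Longrightarrow> q \<in> Rprime b as \<Longrightarrow> loc_mult p q \<in> ?P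
                             \<Longrightarrow> p \<in> ?P \<or> q \<in> ?P"
    using prime unfolding prime_ideal_Rprime_def by blast+
  have mem: "(d, 0) \<in> ?P \<longleftrightarrow> d \<in> I" for d
    using contr by (simp add: ann_Rprime_iff Rprime.base)
  have "1 \<notin> I"
    using proper mem[of 1] by simp
  moreover have "y \<in> I \<or> z \<in> I" if "y * z \<in> I" for y z
  proof -
    have "loc_mult (y, 0) (z, 0) \<in> ?P"
      using that mem[of "y * z"] by (simp add: loc_mult_def)
    then have "(y, 0) \<in> ?P \<or> (z, 0) \<in> ?P"
      by (rule prime_mult[OF Rprime.base Rprime.base])
    then show ?thesis
      using mem by blast
  qed
  ultimately show ?thesis
    using \<open>is_ideal I\<close> unfolding is_prime_ideal_def by blast
qed

theorem mainTheorem8: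
  fixes v :: "'a::comm_ring_1 \<Rightarrow> 'g::linordered_ab_group_add option"
    and b :: 'a and as :: "'a list"
  assumes "noetherian_ring TYPE('a)"
    and "valuation v" and "has_center v"
    and "b \<notin> supp v"
    and "\<forall>a\<in>set as. ext_le (v b) (v a)"
    and "c' \<in> Rprime b as"
  shows "\<exists>c::'a. ann_Rprime b as c' = ann_Rprime b as (c, 0) \<and>
           (prime_ideal_Rprime b as (ann_Rprime b as c') \<longrightarrow>
              (\<exists>N::nat. is_prime_ideal (ann (b ^ N * c))))"
proof -
  obtain x n where c': "c' = (x, n)" by (cases c')
  then have ann_eq: "ann_Rprime b as c' = ann_Rprime b as (x, 0)"
    by (simp only: ann_Rprime_drop_denominator[of b as x n])
  obtain N where contr: "\<And>d. (\<exists>k. b ^ k * (d * x) = 0) \<longleftrightarrow> d \<in> ann (b ^ N * x)"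
    using noetherian_ann_power_stable[OF assms(1)] by blast
  have "prime_ideal_Rprime b as (ann_Rprime b as c') \<longrightarrow> is_prime_ideal (ann (b ^ N * x))"
    using is_prime_ideal_contraction[OF _ contr is_ideal_ann] unfolding ann_eq by blast
  with ann_eq show ?thesis by blast
qed

end
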